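(* Under Assumptions 1, 2 and 3, the limit $R_Q(B)=\lim_{n\to\infty}-\frac1n\log\mathbb{E}_Q[L_n^2\mathbf{1}_{M_n\in B}]$ exists, is finite, and $$R_Q(B)=\inf_{m\in B,\,w\in\mathbb{R}}\{w+J_P(m,w)\}=\inf_{m\in B,\,w\in\mathbb{R}}\{2w+J_Q(m,w)\}.$$
   Context: Setting. For each $n\ge1$, $\mathbf{X}_n$ is a random element of $\Lambda_n=(\mathbb{R}^d)^n$, and $P_n$, $Q_n$ are two mutually absolutely continuous probability measures on $\Lambda_n$. Let $M_n:\Lambda_n\to\mathbb{R}^D$ be a measurable map, and let $B\subset\mathbb{R}^D$ be measurable, with interior $B^\circ$ and closure $\bar B$. Define $L_n=dP_n/dQ_n$ and $W_n=-\frac1n\log L_n$. $\mathbb{E}_P,\mathbb{E}_Q$ denote expectations under $P_n,Q_n$. A rate function is a lower semicontinuous function with values in $[0,\infty]$; it is good if its level sets are compact. A sequence $Z_n$ satisfies the LDP under $R_n$ with rate function $I$ if $-\inf_{G^\circ}I\le\liminf_n\frac1n\log R_n(Z_n\in G)\le\limsup_n\frac1n\log R_n(Z_n\in G)\le-\inf_{\bar G}I$ for all measurable $G$. Assumption 1: $M_n$ satisfies the LDP under $P_n$ with a good rate function $I_P$, $I_P(B):=\inf_{m\in B}I_P(m)<\infty$, and $\lim_{n}-\frac1n\log P_n(M_n\in B)=I_P(B)$. Assumption 2: for some $\delta>0$, $\limsup_{n}\frac1n\log\mathbb{E}_Q[L_n^{2+\delta}\mathbf{1}_{M_n\in\bar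 B}]<\infty$. Assumption 3: (a) $(M_n,W_n)$ satisfies the LDP under $P_n$ on $\mathbb{R}^D\times\mathbb{R}$ with good rate function $J_P$; (b) $(M_n,W_n)$ satisfies the LDP under $Q_n$ with good rate function $J_Q$; (c) $J_P$ and $J_Q$ have the same non-empty domain; (d) $\inf_{B\times\mathbb{R}}\{2w+J_Q(m,w)\}=\inf_{B^\circ\times\mathbb{R}}\{2w+J_Q(m,w)\}=\inf_{\bar B\times\mathbb{R}}\{2w+J_Q(m,w)\}$. *)

theory Defs
  imports "HOL-Probability.Probability"
begin

definition lower_semicont :: "('b::topological_space \<Rightarrow> ereal) \<Rightarrow> bool" where
  "lower_semicont f \<longleftrightarrow> (\<forall>x. \<forall>a. a < f x \<longrightarrow> eventually (\<lambda>y. a < f y) (nhds x))"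

definition rate_function :: "('b::topological_space \<Rightarrow> ereal) \<Rightarrow> bool" where
  "rate_function I \<longleftrightarrow> lower_semicont I \<and> (\<forall>x. 0 \<le> I x)"

definition good_rate_function :: "('b::topological_space \<Rightarrow> ereal) \<Rightarrow> bool" where
  "good_rate_function I \<longleftrightarrow> rate_function I \<and> (\<forall>a::real. compact {x. I x \<le> ereal a})"

definition nlog :: "nat \<Rightarrow> ennreal \<Rightarrow> ereal" where
  "nlog n e = (if e = 0 then -\<infinity> else if e = \<infinity> then \<infinity>
               else ereal (ln (enn2real e) / real n))"

definition LDP :: "(nat \<Rightarrow> 'a measure) \<Rightarrow> (nat \<Rightarrow> 'a \<Rightarrow> 'b::topological_space)
                   \<Rightarrow> ('b \<Rightarrow> ereal) \<Rightarrow> bool" where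
  "LDP R Z I \<longleftrightarrow> (\<forall>G \<in> sets borel.
      - (INF x\<in>interior G. I x)
        \<le> liminf (\<lambda>n. nlog n (emeasure (R n) {\<omega> \<in> space (R n). Z n \<omega> \<in> G}))
    \<and> limsup (\<lambda>n. nlog n (emeasure (R n) {\<omega> \<in> space (R n). Z n \<omega> \<in> G}))
        \<le> - (INF x\<in>closure G. I x))"

text \<open>The likelihood ratio L_n = dP_n/dQ_n (a version of the Radon-Nikodym derivative)
  and W_n = -(1/n) log L_n.\<close>
definition LR :: "(nat \<Rightarrow> 'a measure) \<Rightarrow> (nat \<Rightarrow> 'a measure) \<Rightarrow> nat \<Rightarrow> 'a \<Rightarrow> real" where
  "LR P Q n x = enn2real (RN_deriv (Q n) (P n) x)"

definition Wn :: "(nat \<Rightarrow> 'a measure) \<Rightarrow> (nat \<Rightarrow> 'a measure) \<Rightarrow> nat \<Rightarrow> 'a \<Rightarrow> real" where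
  "Wn P Q n x = - ln (LR P Q n x) / real n"

end

theory Submission
  imports Defs
begin

text \<open>Off a null set \<open>L\<^sub>n = exp (-n W\<^sub>n)\<close>, so
  \<open>E\<^sub>Q[L\<^sub>n\<^sup>2; M\<^sub>n \<in> B] = E\<^sub>Q[exp (-2n W\<^sub>n); M\<^sub>n \<in> B]\<close> is a Laplace functional of the pair
  \<open>(M\<^sub>n, W\<^sub>n)\<close>, and Varadhan's lemma under \<open>Q\<^sub>n\<close> predicts the rate \<open>inf {2w + J\<^sub>Q}\<close>.
  The lower bound comes from a small open box around a near-optimal point. For the upper bound
  the range of \<open>W\<^sub>n\<close> is cut into finitely many slabs, each handled by the LDP upper bound;
  the region \<open>W\<^sub>n \<ge> K\<close> is trivially small, and the region \<open>W\<^sub>n < -K\<close> is controlled by the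
  \<open>(2+\<delta>)\<close>-moment of Assumption 2. The rate is finite: Cauchy-Schwarz gives
  \<open>P\<^sub>n(M\<^sub>n \<in> B)\<^sup>2 \<le> E\<^sub>Q[L\<^sub>n\<^sup>2; M\<^sub>n \<in> B]\<close>, bounding it above by Assumption 1, and
  \<open>L\<^sup>2 \<le> 1 + L\<^bsup>2+\<delta>\<^esup>\<close> bounds it below. Finally, on a small ball around \<open>(m, w)\<close> the
  density \<open>dP\<^sub>n/dQ\<^sub>n\<close> is \<open>e\<^bsup>-n(w \<plusminus> r)\<^esup>\<close>, so comparing the two LDPs there yields
  \<open>J\<^sub>P(m, w) = w + J\<^sub>Q(m, w)\<close>, which turns one expression for the rate into the other.\<close>

lemma nlog_less_iff:
  assumes "n > 0"
  shows "nlog n e < ereal c \<longleftrightarrow> e < ennreal (exp (real n * c))"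
proof (cases "e = 0 \<or> e = \<infinity>")
  case False
  then obtain t where t: "e = ennreal t" "t > 0"
    by (cases e) (auto simp: less_le)
  have "ln t / real n < c \<longleftrightarrow> ln t < real n * c"
    using assms by (simp add: divide_less_eq mult.commute)
  also have "\<dots> \<longleftrightarrow> t < exp (real n * c)"
    using t(2) by (metis exp_less_cancel_iff exp_ln)
  finally show ?thesis
    using t by (simp add: nlog_def ennreal_less_iff)
qed (auto simp: nlog_def)

lemma less_nlog_iff:
  assumes "n > 0"
  shows "ereal c < nlog n e \<longleftrightarrow> ennreal (exp (real n * c)) < e"
proof (cases "e = 0 \<or> e = \<infinity>")
  case False
  then obtain t where t: "e = ennreal t" "t > 0"
    by (cases e) (auto simp: less_le)
  have "c < ln t / real n \<longleftrightarrow> real n * c < ln t"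
    using assms by (simp add: less_divide_eq mult.commute)
  also have "\<dots> \<longleftrightarrow> exp (real n * c) < t"
    using t(2) by (metis exp_less_cancel_iff exp_ln)
  finally show ?thesis
    using t by (simp add: nlog_def ennreal_less_iff)
qed (auto simp: nlog_def)

lemma exp_mult_less_cancel:
  assumes "n > 0" "ennreal (exp (real n * a)) < ennreal (exp (real n * b))"
  shows "a < b"
  using assms by (simp add: ennreal_less_iff mult_less_cancel_left)

lemma ennreal_exp_mult_exp: "ennreal (exp a) * ennreal (exp b) = ennreal (exp (a + b))"
  by (simp add: ennreal_mult[symmetric] exp_add)

lemma ennreal_exp_mult_le_iff:
  "ennreal (exp a) * x \<le> y \<longleftrightarrow> x \<le> ennreal (exp (- a)) * y"
proof
  assume "ennreal (exp a) * x \<le> y"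
  then have "ennreal (exp (- a)) * (ennreal (exp a) * x) \<le> ennreal (exp (- a)) * y"
    by (rule mult_left_mono) simp
  then show "x \<le> ennreal (exp (- a)) * y"
    by (simp add: mult.assoc[symmetric] ennreal_exp_mult_exp)
next
  assume "x \<le> ennreal (exp (- a)) * y"
  then have "ennreal (exp a) * x \<le> ennreal (exp a) * (ennreal (exp (- a)) * y)"
    by (rule mult_left_mono) simp
  then show "ennreal (exp a) * x \<le> y"
    by (simp add: mult.assoc[symmetric] ennreal_exp_mult_exp)
qed

lemma eventually_less_exp_mult:
  assumes "\<epsilon> > 0"
  shows "eventually (\<lambda>n. c < exp (real n * \<epsilon>)) sequentially"
  using eventually_gt_at_top[of "nat \<lceil>\<bar>c\<bar> / \<epsilon>\<rceil>"]
proof eventually_elim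
  case (elim n)
  then have "\<bar>c\<bar> / \<epsilon> < real n" by linarith
  then have "\<bar>c\<bar> < real n * \<epsilon>" using assms by (simp add: divide_less_eq)
  moreover have "real n * \<epsilon> < exp (real n * \<epsilon>)"
    using exp_ge_add_one_self[of "real n * \<epsilon>"] by linarith
  ultimately show ?case by linarith
qed

lemma limsup_nlog_less_PInfty_imp_bound:
  assumes "limsup (\<lambda>n. nlog n (f n)) < \<infinity>"
  obtains C where "eventually (\<lambda>n. f n < ennreal (exp (real n * C))) sequentially"
proof -
  obtain C where "limsup (\<lambda>n. nlog n (f n)) < ereal C"
    using ereal_dense2[OF assms] by blast
  from Limsup_lessD[OF this]
  have "eventually (\<lambda>n. f n < ennreal (exp (real n * C))) sequentially"
    using eventually_gt_at_top[of 0] by eventually_elim (simp add: nlog_less_iff)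
  then show ?thesis by (rule that)
qed

lemma tendsto_neg_nlog:
  assumes lower: "\<And>c. ereal c < - I \<Longrightarrow> eventually (\<lambda>n. ennreal (exp (real n * c)) < f n) sequentially"
    and upper: "\<And>c. - I < ereal c \<Longrightarrow> eventually (\<lambda>n. f n < ennreal (exp (real n * c))) sequentially"
  shows "(\<lambda>n. - nlog n (f n)) \<longlonglongrightarrow> I"
proof (rule order_tendstoI)
  fix a assume "a < I"
  then obtain y where y: "a < ereal y" "ereal y < I" using ereal_dense2 by blast
  then have "- I < ereal (- y)" using ereal_uminus_less_reorder[of I "ereal (- y)"] by simp
  from upper[OF this] show "eventually (\<lambda>n. a < - nlog n (f n)) sequentially"
    using eventually_gt_at_top[of 0]
  proof eventually_elim
    case (elim n)
    then have "nlog n (f n) < ereal (- y)" by (simp add: nlog_less_iff)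
    then have "ereal y < - nlog n (f n)"
      using ereal_less_uminus_reorder[of "ereal y" "nlog n (f n)"] by simp
    with y(1) show ?case by order
  qed
next
  fix a assume "I < a"
  then obtain y where y: "I < ereal y" "ereal y < a" using ereal_dense2 by blast
  then have "ereal (- y) < - I" using ereal_less_uminus_reorder[of "ereal (- y)" I] by simp
  from lower[OF this] show "eventually (\<lambda>n. - nlog n (f n) < a) sequentially"
    using eventually_gt_at_top[of 0]
  proof eventually_elim
    case (elim n)
    then have "ereal (- y) < nlog n (f n)" by (simp add: less_nlog_iff)
    then have "- nlog n (f n) < ereal y"
      using ereal_uminus_less_reorder[of "nlog n (f n)" "ereal y"] by simp
    with y(2) show ?case by order
  qed
qed

lemma tendsto_neg_nlog_real:
  assumes lower: "\<And>c. ereal c < - I \<Longrightarrow> eventually (\<lambda>n. ennreal (exp (real n * c)) < f n) sequentially"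
    and upper: "\<And>c. - I < ereal c \<Longrightarrow> eventually (\<lambda>n. f n < ennreal (exp (real n * c))) sequentially"
    and exp_below: "eventually (\<lambda>n. ennreal (exp (real n * a)) < f n) sequentially"
    and exp_above: "eventually (\<lambda>n. f n \<le> ennreal (exp (real n * b))) sequentially"
  obtains r where "I = ereal r" "(\<lambda>n. - nlog n (f n)) \<longlonglongrightarrow> ereal r"
proof -
  have "I \<noteq> \<infinity>"
  proof
    assume "I = \<infinity>"
    then have "eventually (\<lambda>n. f n < ennreal (exp (real n * a))) sequentially"
      by (intro upper) simp
    with exp_below have "eventually (\<lambda>n. False) sequentially"
      by eventually_elim (meson order.asym)
    then show False by simp
  qed
  moreover have "I \<noteq> - \<infinity>"
  proof
    assume "I = - \<infinity>"
    then have "eventually (\<lambda>n. ennreal (exp (real n * b)) < f n) sequentially"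
      by (intro lower) simp
    with exp_above have "eventually (\<lambda>n. False) sequentially"
      by eventually_elim (meson not_le)
    then show False by simp
  qed
  ultimately obtain r where r: "I = ereal r" by (cases I) auto
  have "(\<lambda>n. - nlog n (f n)) \<longlonglongrightarrow> I"
    by (rule tendsto_neg_nlog[OF lower upper])
  with r that show ?thesis by simp
qed

lemma LDP_lower_bound_open:
  assumes "LDP R Z I" "open G" "z \<in> G" "I z < ereal (- c)"
  shows "eventually (\<lambda>n. ennreal (exp (real n * c)) < emeasure (R n) {\<omega> \<in> space (R n). Z n \<omega> \<in> G}) sequentially"
proof -
  have "(INF x\<in>interior G. I x) < ereal (- c)"
    using assms(2-4) by (simp add: interior_open INF_less_iff) blast
  then have "ereal c < - (INF x\<in>interior G. I x)"
    using ereal_less_uminus_reorder[of "ereal c"] by simp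
  also have "\<dots> \<le> liminf (\<lambda>n. nlog n (emeasure (R n) {\<omega> \<in> space (R n). Z n \<omega> \<in> G}))"
    using assms(1,2) unfolding LDP_def by auto
  finally have "ereal c < liminf (\<lambda>n. nlog n (emeasure (R n) {\<omega> \<in> space (R n). Z n \<omega> \<in> G}))" .
  from less_LiminfD[OF this] show ?thesis
    using eventually_gt_at_top[of 0] by eventually_elim (simp add: less_nlog_iff)
qed

lemma LDP_upper_bound_closure:
  assumes "LDP R Z I" "G \<in> sets borel" "\<And>y. y \<in> closure G \<Longrightarrow> ereal a \<le> I y" "- a < c"
  shows "eventually (\<lambda>n. emeasure (R n) {\<omega> \<in> space (R n). Z n \<omega> \<in> G} < ennreal (exp (real n * c))) sequentially"
proof -
  have "ereal a \<le> (INF y\<in>closure G. I y)" using assms(3) by (rule INF_greatest)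
  then have "- (INF y\<in>closure G. I y) \<le> ereal (- a)"
    using ereal_minus_le_minus[of "INF y\<in>closure G. I y" "ereal a"] by simp
  have "limsup (\<lambda>n. nlog n (emeasure (R n) {\<omega> \<in> space (R n). Z n \<omega> \<in> G})) \<le> - (INF y\<in>closure G. I y)"
    using assms(1,2) unfolding LDP_def by auto
  also have "\<dots> \<le> ereal (- a)" by fact
  also have "\<dots> < ereal c" using assms(4) by simp
  finally have "limsup (\<lambda>n. nlog n (emeasure (R n) {\<omega> \<in> space (R n). Z n \<omega> \<in> G})) < ereal c" .
  from Limsup_lessD[OF this] show ?thesis
    using eventually_gt_at_top[of 0] by eventually_elim (simp add: nlog_less_iff)
qed

lemma lower_semicont_ball:
  fixes f :: "'b::metric_space \<Rightarrow> ereal"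
  assumes "lower_semicont f" "a < f z"
  obtains d where "d > 0" "\<And>y. dist y z < d \<Longrightarrow> a < f y"
  using assms unfolding lower_semicont_def eventually_nhds_metric by blast

lemma LDP_rate_shift_le:
  fixes Z :: "nat \<Rightarrow> 'a \<Rightarrow> 'b::metric_space"
  assumes ldp1: "LDP R1 Z J1" and ldp2: "LDP R2 Z J2"
    and J1_nonneg: "0 \<le> J1 z" and lsc: "lower_semicont J2"
    and space_eq: "\<And>n. space (R1 n) = space (R2 n)"
    and ratio: "\<And>n r. n > 0 \<Longrightarrow> r > 0 \<Longrightarrow>
      emeasure (R1 n) {x \<in> space (R1 n). Z n x \<in> ball z r}
        \<le> ennreal (exp (real n * (r - s))) * emeasure (R2 n) {x \<in> space (R2 n). Z n x \<in> ball z r}"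
  shows "ereal s + J2 z \<le> J1 z"
proof (rule ccontr)
  assume "\<not> ?thesis"
  then have lt: "J1 z < ereal s + J2 z" by simp
  with J1_nonneg obtain p where p: "J1 z = ereal p" by (cases "J1 z") auto
  have "ereal (p - s) < J2 z" using lt p by (cases "J2 z") auto
  then obtain a where a: "p - s < a" "ereal a < J2 z" using ereal_dense2 by force
  obtain d where d: "d > 0" "\<And>y. dist y z < d \<Longrightarrow> ereal a < J2 y"
    using lower_semicont_ball[OF lsc a(2)] by blast
  define r where "r = min ((a - (p - s)) / 4) (d / 2)"
  have "r \<le> (a - (p - s)) / 4" unfolding r_def by (rule min.cobounded1)
  then have r: "r > 0" "r < d" "p - s + 3 * r < a"
    using a(1) d(1) unfolding r_def by auto
  define S where "S n = {x \<in> space (R2 n). Z n x \<in> ball z r}" for n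
  have "z \<in> ball z r" "J1 z < ereal (- (- p - r))" using r(1) p by auto
  from LDP_lower_bound_open[OF ldp1 open_ball this]
  have "eventually (\<lambda>n. ennreal (exp (real n * (- p - r))) < emeasure (R1 n) (S n)) sequentially"
    unfolding S_def space_eq .
  moreover have "eventually (\<lambda>n. emeasure (R2 n) (S n) < ennreal (exp (real n * (r - a)))) sequentially"
  proof -
    have J2_closure: "ereal a \<le> J2 y" if "y \<in> closure (ball z r)" for y
    proof -
      have "dist y z \<le> r"
        using that closure_minimal[OF ball_subset_cball closed_cball, of z r]
        by (auto simp: dist_commute)
      then show ?thesis using d(2)[of y] r(2) by simp
    qed
    have "- a < r - a" using r(1) by simp
    from LDP_upper_bound_closure[OF ldp2 borel_open[OF open_ball] J2_closure this]
    show ?thesis unfolding S_def .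
  qed
  ultimately have "eventually (\<lambda>n. n > 0 \<and>
      ennreal (exp (real n * (- p - r))) < emeasure (R1 n) (S n) \<and>
      emeasure (R2 n) (S n) < ennreal (exp (real n * (r - a)))) sequentially"
    using eventually_gt_at_top[of 0] by eventually_elim blast
  then obtain n where n: "n > 0"
    "ennreal (exp (real n * (- p - r))) < emeasure (R1 n) (S n)"
    "emeasure (R2 n) (S n) < ennreal (exp (real n * (r - a)))"
    by (auto simp: eventually_sequentially)
  have "ennreal (exp (real n * (- p - r))) < ennreal (exp (real n * (r - s))) * emeasure (R2 n) (S n)"
    using n(2) ratio[OF n(1) r(1)] unfolding S_def space_eq by (rule order_less_le_trans)
  also have "\<dots> \<le> ennreal (exp (real n * (r - s))) * ennreal (exp (real n * (r - a)))"
    using n(3) by (intro mult_left_mono) auto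
  also have "\<dots> = ennreal (exp (real n * (2 * r - s - a)))"
    by (simp add: ennreal_exp_mult_exp algebra_simps)
  finally have "- p - r < 2 * r - s - a" by (rule exp_mult_less_cancel[OF n(1)])
  with r(3) show False by linarith
qed

lemma real_cover_by_slabs:
  fixes K h :: real
  assumes "h > 0"
  shows "UNIV \<subseteq> {..< -K} \<union> {K..} \<union> (\<Union>k<nat \<lceil>2 * K / h\<rceil>. {-K + real k * h .. -K + real k * h + h})"
proof
  fix v :: real
  assume "v \<in> UNIV"
  show "v \<in> {..< -K} \<union> {K..} \<union> (\<Union>k<nat \<lceil>2 * K / h\<rceil>. {-K + real k * h .. -K + real k * h + h})"
  proof (cases "-K \<le> v \<and> v < K")
    case True
    define t where "t = (v + K) / h"
    have t: "0 \<le> t" "t < 2 * K / h" "v = -K + t * h"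
      using True assms unfolding t_def by (auto simp: divide_strict_right_mono)
    have "nat \<lfloor>t\<rfloor> < nat \<lceil>2 * K / h\<rceil>"
      using t(1,2) by linarith
    moreover have "real (nat \<lfloor>t\<rfloor>) * h \<le> t * h"
      using t(1) assms by (intro mult_right_mono) linarith+
    moreover have "t * h \<le> (real (nat \<lfloor>t\<rfloor>) + 1) * h"
      using t(1) assms by (intro mult_right_mono) linarith+
    ultimately have "v \<in> (\<Union>k<nat \<lceil>2 * K / h\<rceil>. {-K + real k * h .. -K + real k * h + h})"
      using t(3) by (intro UN_I[of "nat \<lfloor>t\<rfloor>"]) (auto simp: distrib_right)
    then show ?thesis by blast
  qed auto
qed

lemma power2_le_exp_mult_powr:
  fixes L :: real
  assumes "0 < L" "t \<le> \<delta> * ln L"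
  shows "L ^ 2 \<le> exp (- t) * L powr (2 + \<delta>)"
proof -
  have "L powr \<delta> = exp (\<delta> * ln L)"
    using assms(1) by (simp add: powr_def)
  then have powr_eq: "L powr (2 + \<delta>) = L ^ 2 * exp (\<delta> * ln L)"
    using assms(1) by (simp add: powr_add powr_numeral)
  have "L ^ 2 * 1 \<le> L ^ 2 * exp (\<delta> * ln L - t)"
    using assms(2) by (intro mult_left_mono) auto
  also have "\<dots> = exp (- t) * L powr (2 + \<delta>)"
    unfolding powr_eq by (simp add: exp_diff exp_minus field_simps)
  finally show ?thesis by simp
qed

locale equivalent_prob_seq =
  fixes P Q :: "nat \<Rightarrow> (nat \<Rightarrow> 'e::euclidean_space) measure"
    and M :: "nat \<Rightarrow> (nat \<Rightarrow> 'e) \<Rightarrow> 'm::euclidean_space"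
  assumes sets_P: "\<And>n. sets (P n) = sets (\<Pi>\<^sub>M i\<in>{..<n}. (borel :: 'e measure))"
    and sets_Q: "\<And>n. sets (Q n) = sets (\<Pi>\<^sub>M i\<in>{..<n}. (borel :: 'e measure))"
    and prob_P: "\<And>n. prob_space (P n)"
    and prob_Q: "\<And>n. prob_space (Q n)"
    and ac_PQ: "\<And>n. absolutely_continuous (Q n) (P n)"
    and ac_QP: "\<And>n. absolutely_continuous (P n) (Q n)"
    and M_meas: "\<And>n. M n \<in> borel_measurable (\<Pi>\<^sub>M i\<in>{..<n}. (borel :: 'e measure))"
begin

lemma sets_P_eq_Q: "sets (P n) = sets (Q n)"
  using sets_P sets_Q by simp

lemma space_P_eq_Q: "space (P n) = space (Q n)"
  using sets_P_eq_Q sets_eq_imp_space_eq by blast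

lemma M_measurable [measurable]: "M n \<in> borel_measurable (Q n)"
  using M_meas measurable_cong_sets[OF sets_Q[symmetric] refl] by blast

lemma LR_measurable [measurable]: "LR P Q n \<in> borel_measurable (Q n)"
  unfolding LR_def by measurable

lemma Wn_measurable [measurable]: "Wn P Q n \<in> borel_measurable (Q n)"
  unfolding Wn_def by measurable

lemma LR_nonneg: "0 \<le> LR P Q n x"
  unfolding LR_def by simp

definition joint_event :: "nat \<Rightarrow> ('m \<times> real) set \<Rightarrow> (nat \<Rightarrow> 'e) set" where
  "joint_event n G = {x \<in> space (Q n). (M n x, Wn P Q n x) \<in> G}"

definition LR_moment :: "nat \<Rightarrow> nat \<Rightarrow> ('m \<times> real) set \<Rightarrow> ennreal" where
  "LR_moment k n G = (\<integral>\<^sup>+ x. ennreal (LR P Q n x ^ k) * indicator (joint_event n G) x \<partial>Q n)"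

definition LR_powr_moment :: "real \<Rightarrow> nat \<Rightarrow> 'm set \<Rightarrow> ennreal" where
  "LR_powr_moment p n S = (\<integral>\<^sup>+ x. ennreal (LR P Q n x powr p) * indicator {x. M n x \<in> S} x \<partial>Q n)"

lemma joint_event_sets [measurable]: "G \<in> sets borel \<Longrightarrow> joint_event n G \<in> sets (Q n)"
proof -
  assume [measurable]: "G \<in> sets borel"
  have "(\<lambda>x. (M n x, Wn P Q n x)) \<in> borel_measurable (Q n)" by measurable
  from measurable_sets[OF this] show ?thesis
    unfolding joint_event_def by (simp add: vimage_def Int_def conj_commute)
qed

lemma joint_event_mono: "G \<subseteq> H \<Longrightarrow> joint_event n G \<subseteq> joint_event n H"
  unfolding joint_event_def by auto

lemma joint_event_Times_UNIV: "{x \<in> space (P n). M n x \<in> B} = joint_event n (B \<times> UNIV)"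
  unfolding joint_event_def space_P_eq_Q by simp

lemma nn_integral_P_eq_LR:
  assumes "f \<in> borel_measurable (Q n)"
  shows "integral\<^sup>N (P n) f = (\<integral>\<^sup>+x. ennreal (LR P Q n x) * f x \<partial>Q n)"
proof -
  interpret Q: prob_space "Q n" by (rule prob_Q)
  interpret P: prob_space "P n" by (rule prob_P)
  have "AE x in Q n. RN_deriv (Q n) (P n) x \<noteq> \<infinity>"
    by (rule Q.RN_deriv_finite[OF P.sigma_finite_measure_axioms ac_PQ sets_P_eq_Q])
  then have "AE x in Q n. RN_deriv (Q n) (P n) x * f x = ennreal (LR P Q n x) * f x"
    by eventually_elim (simp add: LR_def ennreal_enn2real_if)
  with Q.RN_deriv_nn_integral[OF ac_PQ sets_P_eq_Q assms] show ?thesis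
    by (simp add: nn_integral_cong_AE)
qed

lemma emeasure_P_eq_LR:
  assumes "A \<in> sets (Q n)"
  shows "emeasure (P n) A = (\<integral>\<^sup>+x. ennreal (LR P Q n x) * indicator A x \<partial>Q n)"
proof -
  have "emeasure (P n) A = integral\<^sup>N (P n) (indicator A)"
    using assms sets_P_eq_Q by simp
  also have "\<dots> = (\<integral>\<^sup>+x. ennreal (LR P Q n x) * indicator A x \<partial>Q n)"
    by (rule nn_integral_P_eq_LR) (use assms in measurable)
  finally show ?thesis .
qed

lemma emeasure_P_joint_event:
  "G \<in> sets borel \<Longrightarrow> emeasure (P n) (joint_event n G) = LR_moment 1 n G"
  unfolding LR_moment_def by (simp add: emeasure_P_eq_LR)

text \<open>Since \<open>ln 0 = 0\<close>, the identity \<open>L\<^sub>n = exp (- n W\<^sub>n)\<close> fails where \<open>L\<^sub>n = 0\<close>;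
  mutual absolute continuity makes that set null.\<close>
lemma AE_LR_pos: "AE x in Q n. 0 < LR P Q n x"
proof -
  let ?Z = "{x \<in> space (Q n). LR P Q n x = 0}"
  have Z: "?Z \<in> sets (Q n)" by measurable
  have "emeasure (P n) ?Z = (\<integral>\<^sup>+x. 0 \<partial>Q n)"
    unfolding emeasure_P_eq_LR[OF Z] by (rule nn_integral_cong) (auto split: split_indicator)
  then have "?Z \<in> null_sets (P n)"
    using Z sets_P_eq_Q by (simp add: null_sets_def)
  then have "?Z \<in> null_sets (Q n)"
    using ac_QP unfolding absolutely_continuous_def by auto
  then show ?thesis
    by (rule AE_I') (auto simp: less_le LR_def)
qed

lemma LR_power_eq_exp:
  assumes "n > 0" "0 < LR P Q n x"
  shows "LR P Q n x ^ k = exp (- (real k * real n * Wn P Q n x))"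
proof -
  have "LR P Q n x = exp (- (real n * Wn P Q n x))"
    using assms by (simp add: Wn_def)
  then show ?thesis by (simp add: exp_of_nat_mult[symmetric] algebra_simps)
qed

lemma LR_moment_le:
  assumes "G \<in> sets borel" "n > 0" "\<And>m v. (m, v) \<in> G \<Longrightarrow> a \<le> v"
  shows "LR_moment k n G \<le> ennreal (exp (- (real k * real n * a))) * emeasure (Q n) (joint_event n G)"
  unfolding LR_moment_def nn_integral_cmult_indicator[OF joint_event_sets[OF assms(1)], symmetric]
proof (rule nn_integral_mono_AE)
  show "AE x in Q n. ennreal (LR P Q n x ^ k) * indicator (joint_event n G) x
      \<le> ennreal (exp (- (real k * real n * a))) * indicator (joint_event n G) x"
    using AE_LR_pos
  proof eventually_elim
    case (elim x)
    have "a \<le> Wn P Q n x" if "x \<in> joint_event n G"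
      using that assms(3) unfolding joint_event_def by auto
    then show ?case
      using LR_power_eq_exp[OF assms(2) elim] by (auto intro!: ennreal_leI mult_left_mono split: split_indicator)
  qed
qed

lemma LR_moment_ge:
  assumes "G \<in> sets borel" "n > 0" "\<And>m v. (m, v) \<in> G \<Longrightarrow> v \<le> b"
  shows "ennreal (exp (- (real k * real n * b))) * emeasure (Q n) (joint_event n G) \<le> LR_moment k n G"
  unfolding LR_moment_def nn_integral_cmult_indicator[OF joint_event_sets[OF assms(1)], symmetric]
proof (rule nn_integral_mono_AE)
  show "AE x in Q n. ennreal (exp (- (real k * real n * b))) * indicator (joint_event n G) x
      \<le> ennreal (LR P Q n x ^ k) * indicator (joint_event n G) x"
    using AE_LR_pos
  proof eventually_elim
    case (elim x)
    have "Wn P Q n x \<le> b" if "x \<in> joint_event n G"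
      using that assms(3) unfolding joint_event_def by auto
    then show ?case
      using LR_power_eq_exp[OF assms(2) elim] by (auto intro!: ennreal_leI mult_left_mono split: split_indicator)
  qed
qed

lemma LR_moment_mono: "G \<subseteq> H \<Longrightarrow> LR_moment k n G \<le> LR_moment k n H"
  unfolding LR_moment_def using joint_event_mono[of G H n]
  by (intro nn_integral_mono) (auto intro!: mult_left_mono split: split_indicator)

lemma LR_moment_Un_le:
  assumes "G \<in> sets borel" "H \<in> sets borel"
  shows "LR_moment k n (G \<union> H) \<le> LR_moment k n G + LR_moment k n H"
proof -
  have [measurable]: "joint_event n G \<in> sets (Q n)" "joint_event n H \<in> sets (Q n)"
    using assms by (auto intro: joint_event_sets)
  have "LR_moment k n (G \<union> H)
      \<le> (\<integral>\<^sup>+ x. ennreal (LR P Q n x ^ k) * indicator (joint_event n G) x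
             + ennreal (LR P Q n x ^ k) * indicator (joint_event n H) x \<partial>Q n)"
    unfolding LR_moment_def joint_event_def
    by (intro nn_integral_mono) (auto split: split_indicator)
  also have "\<dots> = LR_moment k n G + LR_moment k n H"
    unfolding LR_moment_def by (intro nn_integral_add) measurable
  finally show ?thesis .
qed

lemma LR_moment_UN_le:
  assumes "finite I" "\<And>i. i \<in> I \<Longrightarrow> H i \<in> sets borel"
  shows "LR_moment k n (\<Union>i\<in>I. H i) \<le> (\<Sum>i\<in>I. LR_moment k n (H i))"
  using assms
proof (induction I rule: finite_induct)
  case empty
  show ?case by (simp add: LR_moment_def joint_event_def)
next
  case (insert i I)
  have "LR_moment k n (\<Union>j\<in>insert i I. H j) \<le> LR_moment k n (H i) + LR_moment k n (\<Union>j\<in>I. H j)"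
    using insert.prems insert.hyps(1) by (simp add: LR_moment_Un_le sets.finite_UN)
  also have "\<dots> \<le> LR_moment k n (H i) + (\<Sum>j\<in>I. LR_moment k n (H j))"
    using insert by (intro add_left_mono) auto
  finally show ?case using insert.hyps by simp
qed

lemma LR_moment_Times_UNIV:
  "LR_moment k n (B \<times> UNIV) = (\<integral>\<^sup>+ x. ennreal (LR P Q n x ^ k) * indicator {x. M n x \<in> B} x \<partial>Q n)"
  unfolding LR_moment_def joint_event_def
  by (intro nn_integral_cong) (auto split: split_indicator)

lemma LR_moment_low_tail_le:
  assumes "S \<in> sets borel" "n > 0" "K \<ge> 0" "\<delta> > 0"
  shows "LR_moment 2 n (S \<times> {..< -K}) \<le> ennreal (exp (- (real n * \<delta> * K))) * LR_powr_moment (2 + \<delta>) n S"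
proof -
  note assms(1)[measurable]
  have "LR_moment 2 n (S \<times> {..< -K})
      \<le> (\<integral>\<^sup>+ x. ennreal (exp (- (real n * \<delta> * K))) * (ennreal (LR P Q n x powr (2 + \<delta>)) * indicator {x. M n x \<in> S} x) \<partial>Q n)"
    unfolding LR_moment_def
  proof (rule nn_integral_mono_AE)
    show "AE x in Q n. ennreal (LR P Q n x ^ 2) * indicator (joint_event n (S \<times> {..< -K})) x
        \<le> ennreal (exp (- (real n * \<delta> * K))) * (ennreal (LR P Q n x powr (2 + \<delta>)) * indicator {x. M n x \<in> S} x)"
      using AE_LR_pos
    proof eventually_elim
      case (elim x)
      let ?L = "LR P Q n x" and ?W = "Wn P Q n x"
      show ?case
      proof (cases "x \<in> joint_event n (S \<times> {..< -K})")
        case True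
        then have S: "M n x \<in> S" and "K \<le> - ?W"
          unfolding joint_event_def by auto
        have "ln ?L = - (real n * ?W)"
          using LR_power_eq_exp[OF assms(2) elim, of 1] by simp
        moreover have "real n * \<delta> * K \<le> real n * \<delta> * (- ?W)"
          using \<open>K \<le> - ?W\<close> assms(4) by (intro mult_left_mono) auto
        ultimately have "real n * \<delta> * K \<le> \<delta> * ln ?L"
          by (simp add: algebra_simps)
        from power2_le_exp_mult_powr[OF elim this] show ?thesis
          using True S by (simp add: ennreal_mult[symmetric] ennreal_leI)
      qed simp
    qed
  qed
  also have "\<dots> = ennreal (exp (- (real n * \<delta> * K))) * LR_powr_moment (2 + \<delta>) n S"
    unfolding LR_powr_moment_def by (rule nn_integral_cmult) measurable
  finally show ?thesis .
qed

lemma LR_moment_le_one_plus_powr_moment: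
  assumes "B \<subseteq> S" "S \<in> sets borel" "\<delta> > 0"
  shows "LR_moment 2 n (B \<times> UNIV) \<le> 1 + LR_powr_moment (2 + \<delta>) n S"
proof -
  interpret Q: prob_space "Q n" by (rule prob_Q)
  note assms(2)[measurable]
  have "LR_moment 2 n (B \<times> UNIV)
      \<le> (\<integral>\<^sup>+ x. 1 + ennreal (LR P Q n x powr (2 + \<delta>)) * indicator {x. M n x \<in> S} x \<partial>Q n)"
    unfolding LR_moment_Times_UNIV
  proof (rule nn_integral_mono)
    fix x
    let ?L = "LR P Q n x"
    have "?L ^ 2 \<le> 1 + ?L powr (2 + \<delta>)"
    proof (cases "?L \<le> 1")
      case True
      then show ?thesis
        using power_le_one[of ?L 2] by (simp add: LR_def add_increasing2)
    next
      case False
      then have "?L ^ 2 \<le> ?L powr (2 + \<delta>)"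
        using assms(3) powr_mono[of 2 "2 + \<delta>" ?L] by (simp add: powr_realpow)
      then show ?thesis by simp
    qed
    then have "ennreal (?L ^ 2) \<le> 1 + ennreal (?L powr (2 + \<delta>))"
      using ennreal_leI ennreal_plus[of 1 "?L powr (2 + \<delta>)"] by fastforce
    then show "ennreal (?L ^ 2) * indicator {x. M n x \<in> B} x
        \<le> 1 + ennreal (?L powr (2 + \<delta>)) * indicator {x. M n x \<in> S} x"
      using assms(1) by (auto split: split_indicator)
  qed
  also have "\<dots> = 1 + LR_powr_moment (2 + \<delta>) n S"
    unfolding LR_powr_moment_def by (simp add: nn_integral_add Q.emeasure_space_1)
  finally show ?thesis .
qed

lemma emeasure_P_sq_le_LR_moment:
  assumes "G \<in> sets borel"
  shows "emeasure (P n) (joint_event n G) ^ 2 \<le> LR_moment 2 n G"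
proof -
  interpret Q: prob_space "Q n" by (rule prob_Q)
  let ?E = "joint_event n G"
  have E[measurable]: "?E \<in> sets (Q n)" using assms by (rule joint_event_sets)
  have "emeasure (P n) ?E = (\<integral>\<^sup>+ x. (ennreal (LR P Q n x) * indicator ?E x) * indicator ?E x \<partial>Q n)"
    unfolding emeasure_P_eq_LR[OF E] by (intro nn_integral_cong) (simp split: split_indicator)
  then have "emeasure (P n) ?E ^ 2
      \<le> (\<integral>\<^sup>+ x. (ennreal (LR P Q n x) * indicator ?E x) ^ 2 \<partial>Q n) * (\<integral>\<^sup>+ x. indicator ?E x ^ 2 \<partial>Q n)"
    by (simp add: Cauchy_Schwarz_nn_integral)
  also have "\<dots> = LR_moment 2 n G * emeasure (Q n) ?E"
  proof -
    have "(\<lambda>x. indicator ?E x ^ 2 :: ennreal) = indicator ?E"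
      by (auto split: split_indicator)
    moreover have "(\<integral>\<^sup>+ x. (ennreal (LR P Q n x) * indicator ?E x) ^ 2 \<partial>Q n) = LR_moment 2 n G"
      unfolding LR_moment_def
      by (intro nn_integral_cong) (auto simp: ennreal_power LR_nonneg split: split_indicator)
    ultimately show ?thesis by simp
  qed
  also have "\<dots> \<le> LR_moment 2 n G"
    using mult_left_mono[OF Q.emeasure_le_1, of "LR_moment 2 n G" ?E] by simp
  finally show ?thesis .
qed

lemma rate_function_shift:
  assumes ldpP: "LDP P (\<lambda>n x. (M n x, Wn P Q n x)) J_P" and rP: "rate_function J_P"
    and ldpQ: "LDP Q (\<lambda>n x. (M n x, Wn P Q n x)) J_Q" and rQ: "rate_function J_Q"
  shows "J_P (m, w) = ereal w + J_Q (m, w)"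
proof -
  have event_eq: "{x \<in> space (P n). (M n x, Wn P Q n x) \<in> G} = joint_event n G"
    "{x \<in> space (Q n). (M n x, Wn P Q n x) \<in> G} = joint_event n G" for n G
    unfolding joint_event_def space_P_eq_Q by simp_all
  have ball_snd: "w - r \<le> v" "v \<le> w + r" if "(m', v) \<in> ball (m, w) r" for m' v r
    using that dist_snd_le[of "(m, w)" "(m', v)"] by (auto simp: dist_real_def)
  have "ereal w + J_Q (m, w) \<le> J_P (m, w)"
  proof (rule LDP_rate_shift_le[OF ldpP ldpQ])
    fix n :: nat and r :: real
    assume "n > 0" "r > 0"
    have "LR_moment 1 n (ball (m, w) r)
        \<le> ennreal (exp (- (real 1 * real n * (w - r)))) * emeasure (Q n) (joint_event n (ball (m, w) r))"
      by (rule LR_moment_le) (auto simp: \<open>n > 0\<close> intro: ball_snd)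
    then show "emeasure (P n) {x \<in> space (P n). (M n x, Wn P Q n x) \<in> ball (m, w) r}
        \<le> ennreal (exp (real n * (r - w))) * emeasure (Q n) {x \<in> space (Q n). (M n x, Wn P Q n x) \<in> ball (m, w) r}"
      unfolding event_eq emeasure_P_joint_event[OF borel_open[OF open_ball]]
      by (simp add: algebra_simps)
  qed (use rP rQ space_P_eq_Q in \<open>auto simp: rate_function_def\<close>)
  moreover have "ereal (- w) + J_P (m, w) \<le> J_Q (m, w)"
  proof (rule LDP_rate_shift_le[OF ldpQ ldpP])
    fix n :: nat and r :: real
    assume "n > 0" "r > 0"
    have "ennreal (exp (- (real 1 * real n * (w + r)))) * emeasure (Q n) (joint_event n (ball (m, w) r))
        \<le> LR_moment 1 n (ball (m, w) r)"
      by (rule LR_moment_ge) (auto simp: \<open>n > 0\<close> intro: ball_snd)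
    then show "emeasure (Q n) {x \<in> space (Q n). (M n x, Wn P Q n x) \<in> ball (m, w) r}
        \<le> ennreal (exp (real n * (r - - w))) * emeasure (P n) {x \<in> space (P n). (M n x, Wn P Q n x) \<in> ball (m, w) r}"
      unfolding event_eq emeasure_P_joint_event[OF borel_open[OF open_ball]] ennreal_exp_mult_le_iff
      by (simp add: algebra_simps)
  qed (use rP rQ space_P_eq_Q in \<open>auto simp: rate_function_def\<close>)
  ultimately show ?thesis
    by (cases "J_P (m, w)"; cases "J_Q (m, w)") auto
qed

lemma INF_rate_shift:
  assumes "LDP P (\<lambda>n x. (M n x, Wn P Q n x)) J_P" "rate_function J_P"
    and "LDP Q (\<lambda>n x. (M n x, Wn P Q n x)) J_Q" "rate_function J_Q"
  shows "(INF z\<in>A. ereal (snd z) + J_P z) = (INF z\<in>A. ereal (2 * snd z) + J_Q z)"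
proof (rule INF_cong[OF refl])
  fix z :: "'m \<times> real"
  show "ereal (snd z) + J_P z = ereal (2 * snd z) + J_Q z"
    using rate_function_shift[OF assms, of "fst z" "snd z"]
    by (cases "J_Q z") auto
qed

lemma LR_moment_lower_bound:
  assumes ldp: "LDP Q (\<lambda>n x. (M n x, Wn P Q n x)) J"
    and c: "ereal c < - (INF z\<in>interior B \<times> UNIV. ereal (2 * snd z) + J z)"
  shows "eventually (\<lambda>n. ennreal (exp (real n * c)) < LR_moment 2 n (B \<times> UNIV)) sequentially"
proof -
  have "(INF z\<in>interior B \<times> UNIV. ereal (2 * snd z) + J z) < ereal (- c)"
    using c ereal_less_uminus_reorder[of "ereal c"] by simp
  then obtain m w where mw: "m \<in> interior B" "ereal (2 * w) + J (m, w) < ereal (- c)"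
    unfolding INF_less_iff by auto
  then have "J (m, w) < ereal (- c - 2 * w)"
    by (cases "J (m, w)") auto
  then obtain j where j: "J (m, w) < ereal j" "j < - c - 2 * w"
    using ereal_dense2 by force
  define r where "r = (- c - 2 * w - j) / 2"
  have r: "r > 0" using j(2) unfolding r_def by simp
  define G where "G = interior B \<times> {..< w + r}"
  have G: "open G" "(m, w) \<in> G" "G \<subseteq> B \<times> UNIV"
    unfolding G_def using mw(1) r interior_subset by (auto intro: open_Times)
  have "J (m, w) < ereal (- (- j))" using j(1) by simp
  from LDP_lower_bound_open[OF ldp G(1,2) this]
  have ev: "eventually (\<lambda>n. ennreal (exp (real n * (- j))) < emeasure (Q n) (joint_event n G)) sequentially"
    unfolding joint_event_def .
  show ?thesis
    using ev eventually_gt_at_top[of 0]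
  proof eventually_elim
    case (elim n)
    have "ennreal (exp (real n * c))
        = ennreal (exp (- (real 2 * real n * (w + r)))) * ennreal (exp (real n * (- j)))"
      by (simp add: ennreal_exp_mult_exp r_def field_simps)
    also have "\<dots> < ennreal (exp (- (real 2 * real n * (w + r)))) * emeasure (Q n) (joint_event n G)"
      using elim(1) by (intro ennreal_mult_strict_left_mono) auto
    also have "\<dots> \<le> LR_moment 2 n G"
      by (rule LR_moment_ge) (use G(1) elim(2) in \<open>auto simp: G_def\<close>)
    also have "\<dots> \<le> LR_moment 2 n (B \<times> UNIV)"
      using G(3) by (rule LR_moment_mono)
    finally show ?case .
  qed
qed

lemma joint_event_slab_upper_bound:
  assumes ldp: "LDP Q (\<lambda>n x. (M n x, Wn P Q n x)) J"
    and S: "closed S" and A: "\<And>z. z \<in> S \<times> UNIV \<Longrightarrow> ereal A \<le> ereal (2 * snd z) + J z"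
    and c: "2 * b - A < c"
  shows "eventually (\<lambda>n. emeasure (Q n) (joint_event n (S \<times> {a..b})) < ennreal (exp (real n * c))) sequentially"
proof -
  have J_closure: "ereal (A - 2 * b) \<le> J z" if "z \<in> closure (S \<times> {a..b})" for z
  proof -
    have "z \<in> S \<times> UNIV" "snd z \<le> b"
      using that S by (auto simp: closure_Times)
    with A[of z] show ?thesis by (cases "J z") auto
  qed
  have "- (A - 2 * b) < c" using c by simp
  from LDP_upper_bound_closure[OF ldp borel_closed[OF closed_Times[OF S closed_atLeastAtMost]] J_closure this]
  show ?thesis unfolding joint_event_def .
qed

lemma LR_moment_le_by_slabs:
  fixes K h u :: real
  defines "N \<equiv> nat \<lceil>2 * K / h\<rceil>"
    and "slab k \<equiv> {-K + real k * h .. -K + real k * h + h}"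
  assumes S: "S \<in> sets borel" and n: "n > 0" and h: "h > 0" and K: "K \<ge> 0" "- 2 * K \<le> u"
    and \<delta>: "\<delta> > 0"
    and low: "LR_powr_moment (2 + \<delta>) n S \<le> ennreal (exp (real n * (\<delta> * K + u)))"
    and slabs: "\<And>k. k < N \<Longrightarrow>
      emeasure (Q n) (joint_event n (S \<times> slab k)) \<le> ennreal (exp (real n * (2 * (-K + real k * h) + u)))"
  shows "LR_moment 2 n (S \<times> UNIV) \<le> ennreal (real (N + 2) * exp (real n * u))"
proof -
  interpret Q: prob_space "Q n" by (rule prob_Q)
  let ?U = "ennreal (exp (real n * u))"
  have borel: "S \<times> {..< -K} \<in> sets borel" "UNIV \<times> {K..} \<in> sets borel" "\<And>k. S \<times> slab k \<in> sets borel"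
    using S by (auto intro!: borel_Times simp: slab_def)
  have "S \<times> UNIV \<subseteq> (S \<times> {..< -K} \<union> UNIV \<times> {K..}) \<union> (\<Union>k<N. S \<times> slab k)"
    using real_cover_by_slabs[OF h, of K] unfolding N_def slab_def by blast
  then have "LR_moment 2 n (S \<times> UNIV)
      \<le> LR_moment 2 n (S \<times> {..< -K} \<union> UNIV \<times> {K..}) + LR_moment 2 n (\<Union>k<N. S \<times> slab k)"
    using borel by (intro order_trans[OF LR_moment_mono LR_moment_Un_le]) auto
  also have "\<dots> \<le> (LR_moment 2 n (S \<times> {..< -K}) + LR_moment 2 n (UNIV \<times> {K..}))
      + (\<Sum>k<N. LR_moment 2 n (S \<times> slab k))"
    using borel by (intro add_mono LR_moment_Un_le LR_moment_UN_le) auto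
  also have "\<dots> \<le> (?U + ?U) + (\<Sum>k<N. ?U)"
  proof (intro add_mono sum_mono)
    have "LR_moment 2 n (S \<times> {..< -K}) \<le> ennreal (exp (- (real n * \<delta> * K))) * LR_powr_moment (2 + \<delta>) n S"
      by (rule LR_moment_low_tail_le[OF S n K(1) \<delta>])
    also have "\<dots> \<le> ennreal (exp (- (real n * \<delta> * K))) * ennreal (exp (real n * (\<delta> * K + u)))"
      using low by (rule mult_left_mono) simp
    finally show "LR_moment 2 n (S \<times> {..< -K}) \<le> ?U"
      by (simp add: ennreal_exp_mult_exp algebra_simps)
    have "LR_moment 2 n (UNIV \<times> {K..}) \<le> ennreal (exp (- (real 2 * real n * K))) * emeasure (Q n) (joint_event n (UNIV \<times> {K..}))"
      using borel(2) n by (rule LR_moment_le) auto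
    also have "\<dots> \<le> ennreal (exp (- (real 2 * real n * K)))"
      using mult_left_mono[OF Q.emeasure_le_1] by simp
    also have "\<dots> \<le> ?U"
      using mult_left_mono[OF K(2), of "real n"] by (intro ennreal_leI) (simp add: algebra_simps)
    finally show "LR_moment 2 n (UNIV \<times> {K..}) \<le> ?U" .
    fix k assume "k \<in> {..<N}"
    have "LR_moment 2 n (S \<times> slab k)
        \<le> ennreal (exp (- (real 2 * real n * (-K + real k * h)))) * emeasure (Q n) (joint_event n (S \<times> slab k))"
      using borel(3) n by (rule LR_moment_le) (auto simp: slab_def)
    also have "\<dots> \<le> ennreal (exp (- (real 2 * real n * (-K + real k * h))))
        * ennreal (exp (real n * (2 * (-K + real k * h) + u)))"
      using slabs \<open>k \<in> {..<N}\<close> by (intro mult_left_mono) auto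
    finally show "LR_moment 2 n (S \<times> slab k) \<le> ?U"
      by (simp add: ennreal_exp_mult_exp algebra_simps)
  qed
  also have "\<dots> = of_nat (N + 2) * ?U"
    by (simp add: algebra_simps mult_2)
  also have "\<dots> = ennreal (real (N + 2) * exp (real n * u))"
    by (simp add: ennreal_of_nat_eq_real_of_nat ennreal_mult)
  finally show ?thesis .
qed

lemma LR_moment_upper_bound:
  assumes ldp: "LDP Q (\<lambda>n x. (M n x, Wn P Q n x)) J" and \<delta>: "\<delta> > 0"
    and T: "eventually (\<lambda>n. LR_powr_moment (2 + \<delta>) n (closure B) < ennreal (exp (real n * C))) sequentially"
    and c: "- (INF z\<in>closure B \<times> UNIV. ereal (2 * snd z) + J z) < ereal c"
  shows "eventually (\<lambda>n. LR_moment 2 n (B \<times> UNIV) < ennreal (exp (real n * c))) sequentially"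
proof -
  define S where "S = closure B"
  have S: "closed S" unfolding S_def by simp
  note T = T[folded S_def] and c = c[folded S_def]
  have "ereal (- c) < (INF z\<in>S \<times> UNIV. ereal (2 * snd z) + J z)"
    using c ereal_uminus_less_reorder[of _ "ereal c"] by simp
  then obtain A where A: "- c < A" "ereal A \<le> (INF z\<in>S \<times> UNIV. ereal (2 * snd z) + J z)"
    using ereal_dense2 less_imp_le by force
  \<comment> \<open>The slab width \<open>h\<close> and the cutoff \<open>K\<close> make each of the \<open>N + 2\<close> pieces at most
    \<open>exp (n u)\<close>; the factor \<open>N + 2\<close> is then absorbed by \<open>exp (n \<epsilon>)\<close>.\<close>
  define \<epsilon> where "\<epsilon> = (c + A) / 4"
  define h where "h = \<epsilon> / 2"
  define u where "u = 2 * \<epsilon> - A"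
  define K where "K = max 0 (max ((C + A) / \<delta>) (A / 2))"
  define N where "N = nat \<lceil>2 * K / h\<rceil>"
  have \<epsilon>: "\<epsilon> > 0" "h > 0"
    using A(1) unfolding \<epsilon>_def h_def by simp_all
  have u: "u + \<epsilon> < c"
    using A(1) unfolding \<epsilon>_def u_def by (auto simp: field_simps)
  have K: "K \<ge> 0" "- 2 * K \<le> u" "C \<le> \<delta> * K + u"
  proof -
    have "(C + A) / \<delta> \<le> K" unfolding K_def by simp
    then have "C + A \<le> \<delta> * K" using \<delta> by (simp add: divide_le_eq mult.commute)
    then show "C \<le> \<delta> * K + u" using \<epsilon>(1) unfolding u_def by simp
  qed (use \<epsilon>(1) in \<open>auto simp: K_def u_def\<close>)
  have slab: "eventually (\<lambda>n. emeasure (Q n) (joint_event n (S \<times> {-K + real k * h .. -K + real k * h + h}))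
      < ennreal (exp (real n * (2 * (-K + real k * h) + u)))) sequentially" for k
    using A(2) \<epsilon>(1) unfolding u_def h_def
    by (intro joint_event_slab_upper_bound[OF ldp S]) (auto intro: order_trans INF_lower)
  have "eventually (\<lambda>n. \<forall>k\<in>{..<N}. emeasure (Q n) (joint_event n (S \<times> {-K + real k * h .. -K + real k * h + h}))
      < ennreal (exp (real n * (2 * (-K + real k * h) + u)))) sequentially"
    by (rule eventually_ball_finite) (use slab in auto)
  then show ?thesis
    using T eventually_less_exp_mult[OF \<epsilon>(1), of "real (N + 2)"] eventually_gt_at_top[of 0]
  proof eventually_elim
    case (elim n)
    have "exp (real n * C) \<le> exp (real n * (\<delta> * K + u))"
      using K(3) by (simp add: mult_left_mono)
    then have "LR_powr_moment (2 + \<delta>) n S \<le> ennreal (exp (real n * (\<delta> * K + u)))"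
      using elim(2) by (meson ennreal_leI less_imp_le order_trans)
    moreover have "emeasure (Q n) (joint_event n (S \<times> {-K + real k * h .. -K + real k * h + h}))
        \<le> ennreal (exp (real n * (2 * (-K + real k * h) + u)))" if "k < N" for k
      using elim(1) that by (meson lessThan_iff less_imp_le)
    ultimately have "LR_moment 2 n (S \<times> UNIV) \<le> ennreal (real (N + 2) * exp (real n * u))"
      unfolding N_def by (rule LR_moment_le_by_slabs[OF borel_closed[OF S] elim(4) \<epsilon>(2) K(1,2) \<delta>])
    moreover have "LR_moment 2 n (B \<times> UNIV) \<le> LR_moment 2 n (S \<times> UNIV)"
      unfolding S_def by (rule LR_moment_mono) (use closure_subset in auto)
    ultimately have "LR_moment 2 n (B \<times> UNIV) \<le> ennreal (real (N + 2) * exp (real n * u))"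
      by (rule order_trans[rotated])
    also have "\<dots> < ennreal (exp (real n * \<epsilon>) * exp (real n * u))"
      using elim(3) by (intro ennreal_lessI mult_strict_right_mono) auto
    also have "\<dots> \<le> ennreal (exp (real n * c))"
      using u elim(4) by (intro ennreal_leI) (simp add: exp_add[symmetric] flip: distrib_left)
    finally show ?case .
  qed
qed

lemma LR_moment_lower_bound_from_prob:
  assumes B: "B \<in> sets borel"
    and lim: "(\<lambda>n. - nlog n (emeasure (P n) {x \<in> space (P n). M n x \<in> B})) \<longlonglongrightarrow> I"
    and b: "I < ereal b"
  shows "eventually (\<lambda>n. ennreal (exp (real n * (- 2 * b))) < LR_moment 2 n (B \<times> UNIV)) sequentially"
  using order_tendstoD(2)[OF lim[unfolded joint_event_Times_UNIV] b] eventually_gt_at_top[of 0]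
proof eventually_elim
  case (elim n)
  interpret P: prob_space "P n" by (rule prob_P)
  let ?E = "joint_event n (B \<times> UNIV)"
  have "ereal (- b) < nlog n (emeasure (P n) ?E)"
    using elim(1) ereal_uminus_less_reorder[of _ "ereal b"] by simp
  then have "exp (real n * (- b)) < measure (P n) ?E"
    using elim(2) by (simp add: less_nlog_iff P.emeasure_eq_measure ennreal_less_iff)
  then have "exp (real n * (- b)) ^ 2 < measure (P n) ?E ^ 2"
    by (rule power_strict_mono) auto
  moreover have "exp (real n * (- 2 * b)) = exp (real 2 * (real n * (- b)))"
    by (simp add: algebra_simps)
  ultimately have "exp (real n * (- 2 * b)) < measure (P n) ?E ^ 2"
    by (simp only: exp_of_nat_mult)
  then have "ennreal (exp (real n * (- 2 * b))) < ennreal (measure (P n) ?E ^ 2)"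
    by (simp add: ennreal_less_iff)
  also have "\<dots> = emeasure (P n) ?E ^ 2"
    by (simp add: P.emeasure_eq_measure ennreal_power)
  also have "\<dots> \<le> LR_moment 2 n (B \<times> UNIV)"
    using B by (intro emeasure_P_sq_le_LR_moment borel_Times) auto
  finally show ?case .
qed

lemma LR_moment_upper_bound_from_powr:
  assumes "B \<subseteq> S" "S \<in> sets borel" "\<delta> > 0"
    and T: "eventually (\<lambda>n. LR_powr_moment (2 + \<delta>) n S < ennreal (exp (real n * C))) sequentially"
  shows "eventually (\<lambda>n. LR_moment 2 n (B \<times> UNIV) \<le> ennreal (exp (real n * (max C 0 + 1)))) sequentially"
  using T eventually_gt_at_top[of 0]
proof eventually_elim
  case (elim n)
  have "exp (real n * C) \<le> exp (real n * max C 0)" "1 \<le> exp (real n * max C 0)"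
    by (simp_all add: mult_left_mono)
  then have "1 + exp (real n * C) \<le> 2 * exp (real n * max C 0)"
    by linarith
  also have "\<dots> \<le> exp (real n) * exp (real n * max C 0)"
  proof (rule mult_right_mono)
    show "2 \<le> exp (real n)"
      using elim(2) exp_ge_add_one_self[of "real n"] by linarith
  qed simp
  finally have real_bound: "1 + exp (real n * C) \<le> exp (real n * (max C 0 + 1))"
    by (simp add: exp_add[symmetric] algebra_simps)
  have "LR_moment 2 n (B \<times> UNIV) \<le> 1 + LR_powr_moment (2 + \<delta>) n S"
    using assms(1-3) by (rule LR_moment_le_one_plus_powr_moment)
  also have "\<dots> \<le> ennreal (1 + exp (real n * C))"
    using elim(1) by (simp add: add_left_mono less_imp_le)
  also have "\<dots> \<le> ennreal (exp (real n * (max C 0 + 1)))"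
    using real_bound by (rule ennreal_leI)
  finally show ?case .
qed

end

theorem lemma1:
  fixes P Q :: "nat \<Rightarrow> (nat \<Rightarrow> 'e::euclidean_space) measure"
    and M :: "nat \<Rightarrow> (nat \<Rightarrow> 'e) \<Rightarrow> 'm::euclidean_space"
    and B :: "'m set"
    and I_P :: "'m \<Rightarrow> ereal"
    and J_P J_Q :: "'m \<times> real \<Rightarrow> ereal"
  assumes sets_P: "\<And>n. sets (P n) = sets (\<Pi>\<^sub>M i\<in>{..<n}. (borel :: 'e measure))"
    and sets_Q: "\<And>n. sets (Q n) = sets (\<Pi>\<^sub>M i\<in>{..<n}. (borel :: 'e measure))"
    and prob_P: "\<And>n. prob_space (P n)"
    and prob_Q: "\<And>n. prob_space (Q n)"
    and ac_PQ: "\<And>n. absolutely_continuous (Q n) (P n)"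
    and ac_QP: "\<And>n. absolutely_continuous (P n) (Q n)"
    and M_meas: "\<And>n. M n \<in> borel_measurable (\<Pi>\<^sub>M i\<in>{..<n}. (borel :: 'e measure))"
    and B_meas: "B \<in> sets borel"
    \<comment> \<open>Assumption 1\<close>
    and A1_ldp: "LDP P M I_P"
    and A1_good: "good_rate_function I_P"
    and A1_fin: "(INF m\<in>B. I_P m) < \<infinity>"
    and A1_lim: "(\<lambda>n. - nlog n (emeasure (P n) {x \<in> space (P n). M n x \<in> B}))
                   \<longlonglongrightarrow> (INF m\<in>B. I_P m)"
    \<comment> \<open>Assumption 2\<close>
    and A2: "\<exists>\<delta>>0. limsup (\<lambda>n. nlog n (\<integral>\<^sup>+ x. ennreal ((LR P Q n x) powr (2 + \<delta>))
                 * indicator {x. M n x \<in> closure B} x \<partial>(Q n))) < \<infinity>"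
    \<comment> \<open>Assumption 3\<close>
    and A3a: "LDP P (\<lambda>n x. (M n x, Wn P Q n x)) J_P" "good_rate_function J_P"
    and A3b: "LDP Q (\<lambda>n x. (M n x, Wn P Q n x)) J_Q" "good_rate_function J_Q"
    and A3c: "{z. J_P z < \<infinity>} = {z. J_Q z < \<infinity>}" "{z. J_P z < \<infinity>} \<noteq> {}"
    and A3d: "(INF z\<in>B \<times> UNIV. ereal (2 * snd z) + J_Q z)
                = (INF z\<in>interior B \<times> UNIV. ereal (2 * snd z) + J_Q z)"
             "(INF z\<in>B \<times> UNIV. ereal (2 * snd z) + J_Q z)
                = (INF z\<in>closure B \<times> UNIV. ereal (2 * snd z) + J_Q z)"
  shows "\<exists>R::real.
           (\<lambda>n. - nlog n (\<integral>\<^sup>+ x. ennreal ((LR P Q n x)\<^sup>2) * indicator {x. M n x \<in> B} x \<partial>(Q n)))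
              \<longlonglongrightarrow> ereal R
         \<and> ereal R = (INF z\<in>B \<times> UNIV. ereal (snd z) + J_P z)
         \<and> ereal R = (INF z\<in>B \<times> UNIV. ereal (2 * snd z) + J_Q z)"
proof -
  interpret equivalent_prob_seq P Q M
    by (rule equivalent_prob_seq.intro[OF sets_P sets_Q prob_P prob_Q ac_PQ ac_QP M_meas])
  define R where "R = (INF z\<in>B \<times> UNIV. ereal (2 * snd z) + J_Q z)"
  from A2 obtain \<delta> where \<delta>: "\<delta> > 0"
    and tail: "limsup (\<lambda>n. nlog n (LR_powr_moment (2 + \<delta>) n (closure B))) < \<infinity>"
    unfolding LR_powr_moment_def by blast
  obtain C
    where T: "eventually (\<lambda>n. LR_powr_moment (2 + \<delta>) n (closure B) < ennreal (exp (real n * C))) sequentially"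
    using limsup_nlog_less_PInfty_imp_bound[OF tail] by blast
  obtain b where b: "(INF m\<in>B. I_P m) < ereal b"
    using A1_fin ereal_dense2 by force
  have lower: "eventually (\<lambda>n. ennreal (exp (real n * c)) < LR_moment 2 n (B \<times> UNIV)) sequentially"
    if "ereal c < - R" for c
    using that unfolding R_def A3d(1) by (rule LR_moment_lower_bound[OF A3b(1)])
  have upper: "eventually (\<lambda>n. LR_moment 2 n (B \<times> UNIV) < ennreal (exp (real n * c))) sequentially"
    if "- R < ereal c" for c
    using that unfolding R_def A3d(2) by (rule LR_moment_upper_bound[OF A3b(1) \<delta> T])
  obtain r where r: "R = ereal r" and lim: "(\<lambda>n. - nlog n (LR_moment 2 n (B \<times> UNIV))) \<longlonglongrightarrow> ereal r"
    by (rule tendsto_neg_nlog_real[OF lower upper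
          LR_moment_lower_bound_from_prob[OF B_meas A1_lim b]
          LR_moment_upper_bound_from_powr[OF closure_subset borel_closed[OF closed_closure] \<delta> T]])
  have "(INF z\<in>B \<times> UNIV. ereal (snd z) + J_P z) = R"
    unfolding R_def using A3a A3b by (intro INF_rate_shift) (auto simp: good_rate_function_def)
  with r lim show ?thesis
    unfolding LR_moment_Times_UNIV R_def by (intro exI[of _ r]) simp
qed

end
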